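(* Let $(V,d,k,q)$ be an instance of the individually fair $k$-center with outliers problem (IF$k$CO) as defined in the context. Then the naive algorithm (Algorithm 1) described in the context outputs a feasible solution $(S,O,\sigma)$ for this instance, i.e. $|S|\le k$ and $|O|\le q$.
   Context: IF$k$CO instance: a finite set $V$ with $|V|=n$, a metric $d$ on $V$ (nonnegative, symmetric, $d_{ii}=0$, triangle inequality), and integers $k\ge1$ and $q\ge0$. A solution is $(S,O,\sigma)$ with $S\subseteq V$ (centers), $O\subseteq V$ (outliers), $\sigma:V\setminus O\to S$; it is feasible if $|S|\le k$ and $|O|\le q$. For $i\in V$, the neighborhood radius $NR(i)$ is the distance from $i$ to its $\lceil n/k\rceil$-th nearest neighbor in $V$, where $i$ counts as its own (first) nearest neighbor. Algorithm 1: set $P:=V$, $S:=\emptyset$. While $P\ne\emptyset$: pick $s\in P$ minimizing $NR(i)$ over $i\in P$; set $S:=S\cup\{s\}$ and $P:=\{i\in P: d_{is}>2\,NR(i)\}$. Then set $O:=\emptyset$ and, for each $i\in V$, let $\sigma(i)$ be a center $h\in S$ minimizing $d_{ih}$. Output $(S,O,\sigma)$. *)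

theory Defs
  imports Complex_Main "HOL-Library.Multiset"
begin

definition is_metric_on :: "'a set \<Rightarrow> ('a \<Rightarrow> 'a \<Rightarrow> real) \<Rightarrow> bool" where
  "is_metric_on V d \<longleftrightarrow>
     (\<forall>i\<in>V. \<forall>j\<in>V. d i j \<ge> 0) \<and>
     (\<forall>i\<in>V. \<forall>j\<in>V. d i j = d j i) \<and>
     (\<forall>i\<in>V. d i i = 0) \<and>
     (\<forall>i\<in>V. \<forall>j\<in>V. \<forall>l\<in>V. d i l \<le> d i j + d j l)"

definition nbr_count :: "'a set \<Rightarrow> nat \<Rightarrow> nat" where
  "nbr_count V k = nat \<lceil>real (card V) / real k\<rceil>"

text \<open>NR(i): distance from i to its ceil(n/k)-th nearest neighbour in V
  (i itself counting as the first), i.e. the ceil(n/k)-th smallest entry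
  (with multiplicity) of the multiset of distances from i to the points of V.\<close>
definition NR :: "'a set \<Rightarrow> ('a \<Rightarrow> 'a \<Rightarrow> real) \<Rightarrow> nat \<Rightarrow> 'a \<Rightarrow> real" where
  "NR V d k i = sorted_list_of_multiset (image_mset (d i) (mset_set V)) ! (nbr_count V k - 1)"

text \<open>One iteration of the while loop of Algorithm 1 on state (P, S).
  Any minimiser may be picked (arbitrary tie-breaking).\<close>
definition alg1_step :: "'a set \<Rightarrow> ('a \<Rightarrow> 'a \<Rightarrow> real) \<Rightarrow> nat \<Rightarrow>
    'a set \<times> 'a set \<Rightarrow> 'a set \<times> 'a set \<Rightarrow> bool" where
  "alg1_step V d k st st' \<longleftrightarrow>
     (\<exists>s. fst st \<noteq> {} \<and> s \<in> fst st \<and> (\<forall>i\<in>fst st. NR V d k s \<le> NR V d k i) \<and>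
          st' = ({i \<in> fst st. d i s > 2 * NR V d k i}, insert s (snd st)))"

definition alg1_output :: "'a set \<Rightarrow> ('a \<Rightarrow> 'a \<Rightarrow> real) \<Rightarrow> nat \<Rightarrow>
    'a set \<Rightarrow> 'a set \<Rightarrow> ('a \<Rightarrow> 'a) \<Rightarrow> bool" where
  "alg1_output V d k S Out \<sigma> \<longleftrightarrow>
     (alg1_step V d k)\<^sup>*\<^sup>* (V, {}) ({}, S) \<and>
     Out = {} \<and>
     (\<forall>i\<in>V. \<sigma> i \<in> S \<and> (\<forall>h\<in>S. d i (\<sigma> i) \<le> d i h))"

end

theory Submission
  imports Defs "HOL-Library.Disjoint_Sets"
begin

text \<open>Every centre s chosen by Algorithm 1 owns the ball of radius NR(s) around it, which
  contains at least \<lceil>n/k\<rceil> points. A point p survives the choice of s only if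
  d(p,s) > 2 NR(p) \<ge> NR(p) + NR(s), since s minimises NR over the remaining points; so the
  balls of later centres are disjoint from that of s. Hence |S| \<lceil>n/k\<rceil> \<le> n, i.e. |S| \<le> k,
  and O is empty.\<close>

lemma size_filter_mset_le_nth_sorted:
  fixes M :: "'a::linorder multiset"
  assumes "0 < m" and "m \<le> size M"
  shows "m \<le> size (filter_mset (\<lambda>x. x \<le> sorted_list_of_multiset M ! (m - 1)) M)"
proof -
  define xs where "xs = sorted_list_of_multiset M"
  define P where "P = (\<lambda>x. x \<le> xs ! (m - 1))"
  have len: "length xs = size M"
    unfolding xs_def by (metis mset_sorted_list_of_multiset size_mset)
  have "\<forall>x\<in>set (take m xs). P x"
  proof
    fix x assume "x \<in> set (take m xs)"
    then obtain j where "j < m" "j < length xs" "x = xs ! j"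
      by (auto simp: in_set_conv_nth)
    then show "P x"
      using assms len unfolding P_def xs_def by (simp add: sorted_nth_mono)
  qed
  then have "m = length (filter P (take m xs))"
    using assms len by (simp add: filter_id_conv)
  also have "\<dots> \<le> length (filter P (take m xs @ drop m xs))"
    by (simp only: filter_append length_append le_add1)
  also have "\<dots> = size (filter_mset P M)"
    unfolding xs_def by (metis append_take_drop_id mset_filter mset_sorted_list_of_multiset size_mset)
  finally show ?thesis
    unfolding P_def xs_def .
qed

lemma nbr_count_pos:
  assumes "V \<noteq> {}" and "finite V" and "k \<ge> 1"
  shows "0 < nbr_count V k"
  using assms by (simp add: nbr_count_def card_gt_0_iff)

lemma nbr_count_le_card:
  assumes "k \<ge> 1"
  shows "nbr_count V k \<le> card V"
proof -
  have "real (card V) / real k \<le> real (card V) / 1"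
    using assms by (intro divide_left_mono) auto
  then show ?thesis
    unfolding nbr_count_def by (simp add: ceiling_le_iff nat_le_iff)
qed

lemma card_le_mult_nbr_count:
  assumes "k \<ge> 1"
  shows "card V \<le> k * nbr_count V k"
proof -
  have "real (card V) / real k \<le> real (nbr_count V k)"
    unfolding nbr_count_def by linarith
  then show ?thesis
    using assms by (simp add: divide_le_eq mult.commute flip: of_nat_mult)
qed

definition nbr_ball :: "'a set \<Rightarrow> ('a \<Rightarrow> 'a \<Rightarrow> real) \<Rightarrow> nat \<Rightarrow> 'a \<Rightarrow> 'a set" where
  "nbr_ball V d k i = {j \<in> V. d i j \<le> NR V d k i}"

lemma nbr_count_le_card_nbr_ball:
  assumes "finite V" and "k \<ge> 1" and "i \<in> V"
  shows "nbr_count V k \<le> card (nbr_ball V d k i)"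
proof -
  define M where "M = image_mset (d i) (mset_set V)"
  have "size M = card V"
    unfolding M_def by simp
  then have "nbr_count V k \<le> size (filter_mset (\<lambda>x. x \<le> NR V d k i) M)"
    using size_filter_mset_le_nth_sorted[of "nbr_count V k" M] assms
      nbr_count_pos[of V k] nbr_count_le_card[of k V]
    unfolding NR_def M_def by fastforce
  also have "\<dots> = card (nbr_ball V d k i)"
    unfolding M_def nbr_ball_def using assms(1)
    by (simp add: filter_mset_image_mset filter_mset_mset_set)
  finally show ?thesis .
qed

lemma closed_balls_disjoint:
  assumes "is_metric_on V d" and "s \<in> V" and "p \<in> V" and "r + r' < d p s"
  shows "{j \<in> V. d s j \<le> r} \<inter> {j \<in> V. d p j \<le> r'} = {}"
proof (rule ccontr)
  assume "{j \<in> V. d s j \<le> r} \<inter> {j \<in> V. d p j \<le> r'} \<noteq> {}"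
  then obtain x where "x \<in> V" "d s x \<le> r" "d p x \<le> r'"
    by auto
  moreover have "d p s \<le> d p x + d s x"
    using assms(1-3) \<open>x \<in> V\<close> unfolding is_metric_on_def by metis
  ultimately show False
    using assms(4) by linarith
qed

definition alg1_invariant :: "'a set \<Rightarrow> ('a \<Rightarrow> 'a \<Rightarrow> real) \<Rightarrow> nat \<Rightarrow> 'a set \<Rightarrow> 'a set \<Rightarrow> bool" where
  "alg1_invariant V d k P S \<longleftrightarrow> P \<subseteq> V \<and> S \<subseteq> V \<and>
     disjoint_family_on (nbr_ball V d k) S \<and>
     (\<forall>s\<in>S. \<forall>p\<in>P. nbr_ball V d k s \<inter> nbr_ball V d k p = {})"

lemma alg1_invariant_step:
  assumes "is_metric_on V d" and "alg1_step V d k (P, S) (P', S')"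
    and "alg1_invariant V d k P S"
  shows "alg1_invariant V d k P' S'"
proof -
  obtain s where s: "s \<in> P" "\<forall>i\<in>P. NR V d k s \<le> NR V d k i"
    and P': "P' = {i \<in> P. d i s > 2 * NR V d k i}" and S': "S' = insert s S"
    using assms(2) unfolding alg1_step_def by auto
  have PV: "P \<subseteq> V"
    using assms(3) unfolding alg1_invariant_def by blast
  have new: "nbr_ball V d k s \<inter> nbr_ball V d k p = {}" if "p \<in> P'" for p
    using that s PV closed_balls_disjoint[OF assms(1), of s p "NR V d k s" "NR V d k p"]
    unfolding P' nbr_ball_def by fastforce
  show ?thesis
    using assms(3) s PV new unfolding alg1_invariant_def P' S'
    by (auto simp: disjoint_family_on_def Int_commute)
qed

lemma alg1_invariant_rtranclp:
  assumes "is_metric_on V d" and "(alg1_step V d k)\<^sup>*\<^sup>* (P, S) (P', S')"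
    and "alg1_invariant V d k P S"
  shows "alg1_invariant V d k P' S'"
  using assms(2,3)
  by (induction rule: rtranclp_induct2) (auto intro: alg1_invariant_step[OF assms(1)])

lemma card_mult_le_card_if_disjoint_family:
  assumes "finite V" and "disjoint_family_on A S"
    and "\<And>s. s \<in> S \<Longrightarrow> A s \<subseteq> V" and "\<And>s. s \<in> S \<Longrightarrow> m \<le> card (A s)"
  shows "card S * m \<le> card V"
proof (cases "finite S")
  case True
  have "card S * m \<le> (\<Sum>s\<in>S. card (A s))"
    using sum_mono[of S "\<lambda>_. m"] assms(4) by simp
  also have "\<dots> = card (\<Union>s\<in>S. A s)"
    using True assms(1-3) by (intro card_UN_disjoint'[symmetric]) (auto intro: finite_subset)
  also have "\<dots> \<le> card V"
    using assms by (intro card_mono) auto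
  finally show ?thesis .
qed simp

theorem lemma1:
  fixes V :: "'a set" and d :: "'a \<Rightarrow> 'a \<Rightarrow> real" and k q :: nat
    and S Out :: "'a set" and \<sigma> :: "'a \<Rightarrow> 'a"
  assumes "finite V" and "is_metric_on V d" and "k \<ge> 1"
    and "alg1_output V d k S Out \<sigma>"
  shows "card S \<le> k \<and> card Out \<le> q"
proof -
  have run: "(alg1_step V d k)\<^sup>*\<^sup>* (V, {}) ({}, S)" and "Out = {}"
    using assms(4) unfolding alg1_output_def by auto
  have "alg1_invariant V d k V {}"
    unfolding alg1_invariant_def disjoint_family_on_def by simp
  then have inv: "alg1_invariant V d k {} S"
    using alg1_invariant_rtranclp[OF assms(2) run] by blast
  then have SV: "S \<subseteq> V"
    unfolding alg1_invariant_def by blast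
  have "card S * nbr_count V k \<le> card V"
  proof (rule card_mult_le_card_if_disjoint_family[where A = "nbr_ball V d k"])
    show "disjoint_family_on (nbr_ball V d k) S"
      using inv unfolding alg1_invariant_def by blast
    show "nbr_count V k \<le> card (nbr_ball V d k s)" if "s \<in> S" for s
      using nbr_count_le_card_nbr_ball[OF assms(1,3)] SV that by blast
  qed (auto simp: nbr_ball_def assms(1))
  also have "\<dots> \<le> k * nbr_count V k"
    using card_le_mult_nbr_count[OF assms(3)] .
  finally have "card S \<le> k" if "V \<noteq> {}"
    using nbr_count_pos[OF that assms(1,3)] by simp
  moreover have "card S = 0" if "V = {}"
    using SV that by simp
  ultimately show ?thesis
    using \<open>Out = {}\<close> by fastforce
qed

end
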